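(* Let $n,m\in\mathbb{N}$. Let $X_1,\ldots,X_n,Y_1,\ldots,Y_m$ be real-valued random variables that are GTAI. Let $\Theta_1,\ldots,\Theta_n,\Delta_1,\ldots,\Delta_m$ be non-negative random variables, none degenerate at zero, arbitrarily dependent among themselves, each with distribution whose support is bounded from above (i.e. there are constants $b_i,d_j\in(0,\infty)$ with $\mathbb{P}(\Theta_i\le b_i)=\mathbb{P}(\Delta_j\le d_j)=1$), and such that the vector $(\Theta_1,\ldots,\Theta_n,\Delta_1,\ldots,\Delta_m)$ is independent of $(X_1,\ldots,X_n,Y_1,\ldots,Y_m)$. Then the products $\Theta_1X_1,\ldots,\Theta_nX_n,\Delta_1Y_1,\ldots,\Delta_mY_m$ are GTAI.
   Context: GTAI (generalized tail asymptotic independence): real-valued random variables $X_1,\ldots,X_n,Y_1,\ldots,Y_m$, whose distributions have supports unbounded from above, are called GTAI if (i) $\lim_{x_i\wedge x_k\wedge y_j\to\infty}\mathbb{P}(|X_i|>x_i\mid X_k>x_k,\,Y_j>y_j)=0$ for all $1\le i\neq k\le n$ and $j=1,\ldots,m$, and (ii) $\lim_{x_i\wedge y_j\wedge y_k\to\infty}\mathbb{P}(|Y_j|>y_j\mid X_i>x_i,\,Y_k>y_k)=0$ for all $1\le j\neq k\le m$ and $i=1,\ldots,n$. Here $a\wedge b=\min\{a,b\}$. *)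

theory Defs
  imports "HOL-Probability.Probability"
begin

text \<open>Elementary conditional probability P(A | B) = P(A \<inter> B) / P(B)
  (with the HOL convention x / 0 = 0).\<close>
definition condP :: "'a measure \<Rightarrow> ('a \<Rightarrow> bool) \<Rightarrow> ('a \<Rightarrow> bool) \<Rightarrow> real" where
  "condP M A B = measure M {\<omega> \<in> space M. A \<omega> \<and> B \<omega>} / measure M {\<omega> \<in> space M. B \<omega>}"

definition unbounded_above :: "'a measure \<Rightarrow> ('a \<Rightarrow> real) \<Rightarrow> bool" where
  "unbounded_above M Z \<longleftrightarrow> (\<forall>x. measure M {\<omega> \<in> space M. Z \<omega> > x} > 0)"

text \<open>The limit as min(x_i, x_k, y_j) \<rightarrow> \<infinity> is the limit along the product filter
  at_top \<times> at_top \<times> at_top.\<close>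
definition GTAI :: "'a measure \<Rightarrow> nat \<Rightarrow> nat \<Rightarrow> (nat \<Rightarrow> 'a \<Rightarrow> real) \<Rightarrow> (nat \<Rightarrow> 'a \<Rightarrow> real) \<Rightarrow> bool" where
  "GTAI M n m X Y \<longleftrightarrow>
     (\<forall>i<n. unbounded_above M (X i)) \<and> (\<forall>j<m. unbounded_above M (Y j)) \<and>
     (\<forall>i<n. \<forall>k<n. \<forall>j<m. i \<noteq> k \<longrightarrow>
        ((\<lambda>(xi, xk, yj). condP M (\<lambda>\<omega>. \<bar>X i \<omega>\<bar> > xi) (\<lambda>\<omega>. X k \<omega> > xk \<and> Y j \<omega> > yj))
          \<longlongrightarrow> 0) (at_top \<times>\<^sub>F at_top \<times>\<^sub>F at_top)) \<and>
     (\<forall>j<m. \<forall>k<m. \<forall>i<n. j \<noteq> k \<longrightarrow>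
        ((\<lambda>(xi, yj, yk). condP M (\<lambda>\<omega>. \<bar>Y j \<omega>\<bar> > yj) (\<lambda>\<omega>. X i \<omega> > xi \<and> Y k \<omega> > yk))
          \<longlongrightarrow> 0) (at_top \<times>\<^sub>F at_top \<times>\<^sub>F at_top))"

end

theory Submission
  imports Defs
begin

(* Independence lets us freeze the multipliers. For fixed values 0 <= s_i <= B_i the event
   |s_1 Z_1| > a, s_2 Z_2 > b, s_3 Z_3 > c lies inside |Z_1| > a/B_1, Z_2 > b/s_2, Z_3 > c/s_3, whose
   thresholds are still large, while the conditioning event s_2 Z_2 > b, s_3 Z_3 > c equals
   Z_2 > b/s_2, Z_3 > c/s_3. So the GTAI bound "probability of the joint event <= e times probability
   of the conditioning event" holds for every frozen value of the multipliers, and integrating over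
   their law (Fubini for an independent pair) gives it for the products. Unboundedness from above
   survives because each multiplier is positive with positive probability. *)

lemma eventually_at_top_prod3:
  "eventually P (at_top \<times>\<^sub>F at_top \<times>\<^sub>F (at_top :: 'a::linorder filter)) \<longleftrightarrow>
     (\<exists>T. \<forall>a b c. T \<le> a \<longrightarrow> T \<le> b \<longrightarrow> T \<le> c \<longrightarrow> P (a, b, c))"
proof
  assume "eventually P (at_top \<times>\<^sub>F at_top \<times>\<^sub>F at_top)"
  then obtain Pa Pbc where "eventually Pa at_top" "eventually Pbc (at_top \<times>\<^sub>F at_top)"
      and P: "\<And>a bc. Pa a \<Longrightarrow> Pbc bc \<Longrightarrow> P (a, bc)"
    unfolding eventually_prod_filter by blast
  moreover from this(2) obtain Q where "eventually Q at_top" "\<And>b c. Q b \<Longrightarrow> Q c \<Longrightarrow> Pbc (b, c)"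
    unfolding eventually_prod_same by blast
  ultimately obtain T1 T2 where "\<And>a. T1 \<le> a \<Longrightarrow> Pa a" "\<And>b. T2 \<le> b \<Longrightarrow> Q b"
    unfolding eventually_at_top_linorder by metis
  then show "\<exists>T. \<forall>a b c. T \<le> a \<longrightarrow> T \<le> b \<longrightarrow> T \<le> c \<longrightarrow> P (a, b, c)"
    using P \<open>\<And>b c. Q b \<Longrightarrow> Q c \<Longrightarrow> Pbc (b, c)\<close> by (intro exI[of _ "max T1 T2"]) auto
next
  assume "\<exists>T. \<forall>a b c. T \<le> a \<longrightarrow> T \<le> b \<longrightarrow> T \<le> c \<longrightarrow> P (a, b, c)"
  then obtain T where T: "\<And>a b c. T \<le> a \<Longrightarrow> T \<le> b \<Longrightarrow> T \<le> c \<Longrightarrow> P (a, b, c)" by blast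
  have "eventually (\<lambda>x. T \<le> fst x \<and> T \<le> fst (snd x) \<and> T \<le> snd (snd x)) (at_top \<times>\<^sub>F at_top \<times>\<^sub>F at_top)"
    by (intro eventually_prodI eventually_ge_at_top)
  then show "eventually P (at_top \<times>\<^sub>F at_top \<times>\<^sub>F at_top)"
    by (rule eventually_mono) (metis T prod.collapse)
qed

lemma tendsto_zero_at_top_prod3_iff:
  fixes h :: "'a::linorder \<times> 'a \<times> 'a \<Rightarrow> real"
  shows "(h \<longlongrightarrow> 0) (at_top \<times>\<^sub>F at_top \<times>\<^sub>F at_top) \<longleftrightarrow>
     (\<forall>e>0. \<exists>T. \<forall>a b c. T \<le> a \<longrightarrow> T \<le> b \<longrightarrow> T \<le> c \<longrightarrow> \<bar>h (a, b, c)\<bar> \<le> e)"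
proof -
  have "(h \<longlongrightarrow> 0) (at_top \<times>\<^sub>F at_top \<times>\<^sub>F at_top) \<longleftrightarrow>
     (\<forall>e>0. \<exists>T. \<forall>a b c. T \<le> a \<longrightarrow> T \<le> b \<longrightarrow> T \<le> c \<longrightarrow> \<bar>h (a, b, c)\<bar> < e)"
    unfolding tendsto_iff eventually_at_top_prod3 by (simp add: dist_real_def)
  also have "\<dots> \<longleftrightarrow>
     (\<forall>e>0. \<exists>T. \<forall>a b c. T \<le> a \<longrightarrow> T \<le> b \<longrightarrow> T \<le> c \<longrightarrow> \<bar>h (a, b, c)\<bar> \<le> e)"
  proof
    assume "\<forall>e>0. \<exists>T. \<forall>a b c. T \<le> a \<longrightarrow> T \<le> b \<longrightarrow> T \<le> c \<longrightarrow> \<bar>h (a, b, c)\<bar> < e"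
    then show "\<forall>e>0. \<exists>T. \<forall>a b c. T \<le> a \<longrightarrow> T \<le> b \<longrightarrow> T \<le> c \<longrightarrow> \<bar>h (a, b, c)\<bar> \<le> e"
      by (meson less_imp_le)
  next
    assume bound: "\<forall>e>0. \<exists>T. \<forall>a b c. T \<le> a \<longrightarrow> T \<le> b \<longrightarrow> T \<le> c \<longrightarrow> \<bar>h (a, b, c)\<bar> \<le> e"
    show "\<forall>e>0. \<exists>T. \<forall>a b c. T \<le> a \<longrightarrow> T \<le> b \<longrightarrow> T \<le> c \<longrightarrow> \<bar>h (a, b, c)\<bar> < e"
    proof (intro allI impI)
      fix e :: real assume "0 < e"
      then have "0 < e / 2" by simp
      with bound obtain T where T: "\<forall>a b c. T \<le> a \<longrightarrow> T \<le> b \<longrightarrow> T \<le> c \<longrightarrow> \<bar>h (a, b, c)\<bar> \<le> e / 2"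
        by blast
      have "e / 2 < e" using \<open>0 < e\<close> by simp
      with T show "\<exists>T. \<forall>a b c. T \<le> a \<longrightarrow> T \<le> b \<longrightarrow> T \<le> c \<longrightarrow> \<bar>h (a, b, c)\<bar> < e"
        by (meson order.strict_trans1)
    qed
  qed
  finally show ?thesis .
qed

lemma filterlim_at_top_prod3_swap12:
  "filterlim (\<lambda>(a, b, c). (b, a, c) :: 'a::linorder \<times> 'a \<times> 'a)
     (at_top \<times>\<^sub>F at_top \<times>\<^sub>F at_top) (at_top \<times>\<^sub>F at_top \<times>\<^sub>F at_top)"
  unfolding filterlim_def le_filter_def eventually_filtermap
proof (intro allI impI)
  fix P :: "'a \<times> 'a \<times> 'a \<Rightarrow> bool"
  assume "eventually P (at_top \<times>\<^sub>F at_top \<times>\<^sub>F at_top)"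
  then obtain T where "\<forall>a b c. T \<le> a \<longrightarrow> T \<le> b \<longrightarrow> T \<le> c \<longrightarrow> P (a, b, c)"
    unfolding eventually_at_top_prod3 by blast
  then show "eventually (\<lambda>x. P (case x of (a, b, c) \<Rightarrow> (b, a, c))) (at_top \<times>\<^sub>F at_top \<times>\<^sub>F at_top)"
    unfolding eventually_at_top_prod3 by auto
qed

lemma tendsto_at_top_prod3_swap12:
  fixes h :: "'a::linorder \<times> 'a \<times> 'a \<Rightarrow> 'b::topological_space"
  shows "((\<lambda>(a, b, c). h (b, a, c)) \<longlongrightarrow> l) (at_top \<times>\<^sub>F at_top \<times>\<^sub>F at_top) \<longleftrightarrow>
    (h \<longlongrightarrow> l) (at_top \<times>\<^sub>F at_top \<times>\<^sub>F at_top)"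
proof
  assume "((\<lambda>(a, b, c). h (b, a, c)) \<longlongrightarrow> l) (at_top \<times>\<^sub>F at_top \<times>\<^sub>F at_top)"
  from filterlim_compose[OF this filterlim_at_top_prod3_swap12] show "(h \<longlongrightarrow> l) (at_top \<times>\<^sub>F at_top \<times>\<^sub>F at_top)"
    by (simp add: case_prod_beta)
next
  assume "(h \<longlongrightarrow> l) (at_top \<times>\<^sub>F at_top \<times>\<^sub>F at_top)"
  from filterlim_compose[OF this filterlim_at_top_prod3_swap12]
  show "((\<lambda>(a, b, c). h (b, a, c)) \<longlongrightarrow> l) (at_top \<times>\<^sub>F at_top \<times>\<^sub>F at_top)"
    by (simp add: case_prod_unfold)
qed

lemma condP_nonneg: "0 \<le> condP M A B"
  unfolding condP_def by simp

lemma abs_condP [simp]: "\<bar>condP M A B\<bar> = condP M A B"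
  using condP_nonneg by (rule abs_of_nonneg)

lemma (in finite_measure) condP_le_iff:
  assumes "{\<omega> \<in> space M. B \<omega>} \<in> sets M" and "0 \<le> d"
  shows "condP M A B \<le> d \<longleftrightarrow>
    measure M {\<omega> \<in> space M. A \<omega> \<and> B \<omega>} \<le> d * measure M {\<omega> \<in> space M. B \<omega>}"
proof (cases "measure M {\<omega> \<in> space M. B \<omega>} = 0")
  case True
  have "measure M {\<omega> \<in> space M. A \<omega> \<and> B \<omega>} \<le> measure M {\<omega> \<in> space M. B \<omega>}"
    using assms by (intro finite_measure_mono) auto
  with True assms(2) show ?thesis
    unfolding condP_def by (simp add: measure_nonneg antisym)
next
  case False
  then show ?thesis
    unfolding condP_def by (simp add: divide_le_eq zero_less_measure_iff)
qed

context prob_space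
begin

lemma emeasure_distr_Pair_section:
  assumes "V \<in> measurable M N2" and "S \<in> sets (N1 \<Otimes>\<^sub>M N2)" and "u \<in> space N1"
  shows "emeasure (distr M N2 V) (Pair u -` S) = emeasure M {\<eta> \<in> space M. (u, V \<eta>) \<in> S}"
  using assms by (subst emeasure_distr) (auto intro!: arg_cong[where f="emeasure M"] sets_Pair1)

lemma measurable_emeasure_indep_section:
  assumes "indep_var N1 U N2 V" and "S \<in> sets (N1 \<Otimes>\<^sub>M N2)"
  shows "(\<lambda>\<omega>. emeasure M {\<eta> \<in> space M. (U \<omega>, V \<eta>) \<in> S}) \<in> borel_measurable M"
proof -
  have U: "U \<in> measurable M N1" and V: "V \<in> measurable M N2"
    using assms(1) by (auto simp: indep_var_distribution_eq)
  interpret PV: prob_space "distr M N2 V" using V by (rule prob_space_distr)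
  have "S \<in> sets (N1 \<Otimes>\<^sub>M distr M N2 V)"
    using assms(2) by (simp add: sets_pair_measure_cong[OF refl sets_distr])
  then have "(\<lambda>\<omega>. emeasure (distr M N2 V) (Pair (U \<omega>) -` S)) \<in> borel_measurable M"
    by (rule measurable_compose[OF U PV.measurable_emeasure_Pair])
  then show ?thesis
    by (rule measurable_cong[THEN iffD1, rotated])
       (use U V assms(2) in \<open>auto simp: emeasure_distr_Pair_section measurable_space\<close>)
qed

lemma emeasure_indep_var_Pair:
  assumes "indep_var N1 U N2 V" and "S \<in> sets (N1 \<Otimes>\<^sub>M N2)"
  shows "emeasure M {\<omega> \<in> space M. (U \<omega>, V \<omega>) \<in> S}
       = (\<integral>\<^sup>+\<omega>. emeasure M {\<eta> \<in> space M. (U \<omega>, V \<eta>) \<in> S} \<partial>M)"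
proof -
  have U: "U \<in> measurable M N1" and V: "V \<in> measurable M N2"
    and joint: "distr M N1 U \<Otimes>\<^sub>M distr M N2 V = distr M (N1 \<Otimes>\<^sub>M N2) (\<lambda>\<omega>. (U \<omega>, V \<omega>))"
    using assms(1) by (auto simp: indep_var_distribution_eq)
  interpret PV: prob_space "distr M N2 V" using V by (rule prob_space_distr)
  have "emeasure M {\<omega> \<in> space M. (U \<omega>, V \<omega>) \<in> S}
      = emeasure (distr M (N1 \<Otimes>\<^sub>M N2) (\<lambda>\<omega>. (U \<omega>, V \<omega>))) S"
    using U V assms(2) by (subst emeasure_distr) (auto intro!: arg_cong[where f="emeasure M"])
  also have "\<dots> = (\<integral>\<^sup>+u. emeasure (distr M N2 V) (Pair u -` S) \<partial>distr M N1 U)"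
    using assms(2) by (simp add: joint[symmetric] PV.emeasure_pair_measure_alt)
  also have "\<dots> = (\<integral>\<^sup>+\<omega>. emeasure (distr M N2 V) (Pair (U \<omega>) -` S) \<partial>M)"
    using assms(2) U by (intro nn_integral_distr PV.measurable_emeasure_Pair) auto
  also have "\<dots> = (\<integral>\<^sup>+\<omega>. emeasure M {\<eta> \<in> space M. (U \<omega>, V \<eta>) \<in> S} \<partial>M)"
    using U V assms(2) by (intro nn_integral_cong) (auto simp: emeasure_distr_Pair_section measurable_space)
  finally show ?thesis .
qed

lemma emeasure_indep_var_Pair_le:
  assumes "indep_var N1 U N2 V" and "S \<in> sets (N1 \<Otimes>\<^sub>M N2)" and "S' \<in> sets (N1 \<Otimes>\<^sub>M N2)"
    and "AE \<omega> in M. emeasure M {\<eta> \<in> space M. (U \<omega>, V \<eta>) \<in> S}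
                     \<le> c * emeasure M {\<eta> \<in> space M. (U \<omega>, V \<eta>) \<in> S'}"
  shows "emeasure M {\<omega> \<in> space M. (U \<omega>, V \<omega>) \<in> S} \<le> c * emeasure M {\<omega> \<in> space M. (U \<omega>, V \<omega>) \<in> S'}"
  using assms
  by (simp add: emeasure_indep_var_Pair nn_integral_cmult[symmetric] measurable_emeasure_indep_section
      nn_integral_mono_AE)

lemma emeasure_indep_var_Pair_eq_0:
  assumes "indep_var N1 U N2 V" and "S \<in> sets (N1 \<Otimes>\<^sub>M N2)"
    and "emeasure M {\<omega> \<in> space M. (U \<omega>, V \<omega>) \<in> S} = 0"
  shows "AE \<omega> in M. emeasure M {\<eta> \<in> space M. (U \<omega>, V \<eta>) \<in> S} = 0"
  using assms by (simp add: emeasure_indep_var_Pair nn_integral_0_iff_AE measurable_emeasure_indep_section)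

lemma AE_nonneg_le_of_prob_le_eq_1:
  assumes "AE \<omega> in M. 0 \<le> Z \<omega>" and "prob {\<omega> \<in> space M. Z \<omega> \<le> b} = 1"
  shows "AE \<omega> in M. 0 \<le> Z \<omega> \<and> Z \<omega> \<le> b"
  using assms(1) AE_prob_1[OF assms(2)] by eventually_elim auto

lemma unbounded_above_indep_mult:
  fixes f :: "'u \<Rightarrow> real" and g :: "'u \<Rightarrow> real"
  assumes ind: "indep_var N1 U N2 V"
    and [measurable]: "f \<in> borel_measurable N1" "g \<in> borel_measurable N2"
    and nonneg: "AE \<omega> in M. 0 \<le> f (U \<omega>)"
    and nondegenerate: "prob {\<omega> \<in> space M. f (U \<omega>) = 0} < 1"
    and unbounded: "unbounded_above M (\<lambda>\<omega>. g (V \<omega>))"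
  shows "unbounded_above M (\<lambda>\<omega>. f (U \<omega>) * g (V \<omega>))"
  unfolding unbounded_above_def
proof
  fix x
  have U[measurable]: "U \<in> measurable M N1" and V[measurable]: "V \<in> measurable M N2"
    using ind by (auto simp: indep_var_distribution_eq)
  define S where "S = {p \<in> space (N1 \<Otimes>\<^sub>M N2). x < f (fst p) * g (snd p)}"
  have S: "S \<in> sets (N1 \<Otimes>\<^sub>M N2)"
    unfolding S_def by measurable
  have S_eq: "{\<omega> \<in> space M. x < f (U \<omega>) * g (V \<omega>)} = {\<omega> \<in> space M. (U \<omega>, V \<omega>) \<in> S}"
    by (auto simp: S_def space_pair_measure measurable_space[OF U] measurable_space[OF V])
  show "0 < prob {\<omega> \<in> space M. x < f (U \<omega>) * g (V \<omega>)}"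
  proof (rule ccontr)
    assume "\<not> ?thesis"
    then have "emeasure M {\<omega> \<in> space M. (U \<omega>, V \<omega>) \<in> S} = 0"
      by (simp add: S_eq[symmetric] emeasure_eq_measure zero_less_measure_iff)
    then have "AE \<omega> in M. emeasure M {\<eta> \<in> space M. (U \<omega>, V \<eta>) \<in> S} = 0"
      by (rule emeasure_indep_var_Pair_eq_0[OF ind S])
    then have "AE \<omega> in M. f (U \<omega>) = 0"
      using nonneg AE_space
    proof eventually_elim
      case (elim \<omega>)
      show "f (U \<omega>) = 0"
      proof (rule ccontr)
        assume "f (U \<omega>) \<noteq> 0"
        with elim(2) have pos: "0 < f (U \<omega>)" by simp
        have "{\<eta> \<in> space M. (U \<omega>, V \<eta>) \<in> S} = {\<eta> \<in> space M. x / f (U \<omega>) < g (V \<eta>)}"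
          using elim(3) pos by (auto simp: S_def space_pair_measure measurable_space[OF U] measurable_space[OF V] divide_less_eq mult.commute)
        moreover have "0 < prob {\<eta> \<in> space M. x / f (U \<omega>) < g (V \<eta>)}"
          using unbounded unfolding unbounded_above_def by blast
        ultimately show False
          using elim(1) by (simp add: emeasure_eq_measure)
      qed
    qed
    then have "prob {\<omega> \<in> space M. f (U \<omega>) = 0} = 1"
      by (subst prob_eq_1) auto
    with nondegenerate show False by simp
  qed
qed

lemma prob_const_mult_tail_le:
  fixes Z1 Z2 Z3 :: "'a \<Rightarrow> real"
  assumes [measurable]: "Z1 \<in> borel_measurable M" "Z2 \<in> borel_measurable M" "Z3 \<in> borel_measurable M"
    and s: "0 \<le> s1" "s1 \<le> B1" "0 \<le> s2" "s2 \<le> B2" "0 \<le> s3" "s3 \<le> B3"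
    and B: "0 < B1" "0 < B2" "0 < B3"
    and tail: "\<And>a b c. T \<le> a \<Longrightarrow> T \<le> b \<Longrightarrow> T \<le> c \<Longrightarrow>
        prob {\<omega> \<in> space M. a < \<bar>Z1 \<omega>\<bar> \<and> b < Z2 \<omega> \<and> c < Z3 \<omega>}
          \<le> e * prob {\<omega> \<in> space M. b < Z2 \<omega> \<and> c < Z3 \<omega>}"
    and "0 \<le> e"
    and thresholds: "max T 0 \<le> a / B1" "max T 0 \<le> b / B2" "max T 0 \<le> c / B3"
  shows "prob {\<omega> \<in> space M. a < \<bar>s1 * Z1 \<omega>\<bar> \<and> b < s2 * Z2 \<omega> \<and> c < s3 * Z3 \<omega>}
      \<le> e * prob {\<omega> \<in> space M. b < s2 * Z2 \<omega> \<and> c < s3 * Z3 \<omega>}"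
proof (cases "s2 = 0 \<or> s3 = 0")
  case True
  \<comment> \<open>the \<open>0\<close> in \<open>max T 0\<close> keeps \<open>b, c \<ge> 0\<close>, so a vanishing multiplier empties the event\<close>
  have "0 \<le> b / B2" "0 \<le> c / B3"
    using thresholds by linarith+
  with B True have "{\<omega> \<in> space M. a < \<bar>s1 * Z1 \<omega>\<bar> \<and> b < s2 * Z2 \<omega> \<and> c < s3 * Z3 \<omega>} = {}"
    by (auto simp: zero_le_divide_iff)
  with \<open>0 \<le> e\<close> show ?thesis
    by (simp only: measure_empty) simp
next
  case False
  with s have pos: "0 < s2" "0 < s3" by auto
  have "{\<omega> \<in> space M. a < \<bar>s1 * Z1 \<omega>\<bar> \<and> b < s2 * Z2 \<omega> \<and> c < s3 * Z3 \<omega>}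
      \<subseteq> {\<omega> \<in> space M. a / B1 < \<bar>Z1 \<omega>\<bar> \<and> b / s2 < Z2 \<omega> \<and> c / s3 < Z3 \<omega>}"
  proof safe
    fix \<omega> assume "a < \<bar>s1 * Z1 \<omega>\<bar>" "b < s2 * Z2 \<omega>" "c < s3 * Z3 \<omega>"
    moreover have "\<bar>s1 * Z1 \<omega>\<bar> \<le> B1 * \<bar>Z1 \<omega>\<bar>"
      using s by (simp add: abs_mult mult_right_mono)
    ultimately show "a / B1 < \<bar>Z1 \<omega>\<bar>" "b / s2 < Z2 \<omega>" "c / s3 < Z3 \<omega>"
      using B pos by (auto simp: divide_less_eq mult.commute)
  qed
  then have "prob {\<omega> \<in> space M. a < \<bar>s1 * Z1 \<omega>\<bar> \<and> b < s2 * Z2 \<omega> \<and> c < s3 * Z3 \<omega>}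
      \<le> prob {\<omega> \<in> space M. a / B1 < \<bar>Z1 \<omega>\<bar> \<and> b / s2 < Z2 \<omega> \<and> c / s3 < Z3 \<omega>}"
    by (intro finite_measure_mono) measurable
  also have "\<dots> \<le> e * prob {\<omega> \<in> space M. b / s2 < Z2 \<omega> \<and> c / s3 < Z3 \<omega>}"
  proof (rule tail)
    have "0 \<le> b / B2" "0 \<le> c / B3"
      using thresholds by linarith+
    then have "b / B2 \<le> b / s2" "c / B3 \<le> c / s3"
      using s pos B by (auto simp: zero_le_divide_iff intro: divide_left_mono)
    then show "T \<le> a / B1" "T \<le> b / s2" "T \<le> c / s3"
      using thresholds by linarith+
  qed
  also have "{\<omega> \<in> space M. b / s2 < Z2 \<omega> \<and> c / s3 < Z3 \<omega>} = {\<omega> \<in> space M. b < s2 * Z2 \<omega> \<and> c < s3 * Z3 \<omega>}"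
    using pos by (auto simp: divide_less_eq mult.commute)
  finally show ?thesis .
qed

lemma measure_indep_mult_tail_le:
  fixes f1 f2 f3 g1 g2 g3 :: "'u \<Rightarrow> real"
  assumes ind: "indep_var N1 U N2 V"
    and [measurable]: "f1 \<in> borel_measurable N1" "f2 \<in> borel_measurable N1" "f3 \<in> borel_measurable N1"
      "g1 \<in> borel_measurable N2" "g2 \<in> borel_measurable N2" "g3 \<in> borel_measurable N2"
    and bounded: "AE \<omega> in M. 0 \<le> f1 (U \<omega>) \<and> f1 (U \<omega>) \<le> B1"
      "AE \<omega> in M. 0 \<le> f2 (U \<omega>) \<and> f2 (U \<omega>) \<le> B2" "AE \<omega> in M. 0 \<le> f3 (U \<omega>) \<and> f3 (U \<omega>) \<le> B3"
    and B: "0 < B1" "0 < B2" "0 < B3"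
    and tail: "\<And>a b c. T \<le> a \<Longrightarrow> T \<le> b \<Longrightarrow> T \<le> c \<Longrightarrow>
        prob {\<omega> \<in> space M. a < \<bar>g1 (V \<omega>)\<bar> \<and> b < g2 (V \<omega>) \<and> c < g3 (V \<omega>)}
          \<le> e * prob {\<omega> \<in> space M. b < g2 (V \<omega>) \<and> c < g3 (V \<omega>)}"
    and "0 \<le> e"
    and thresholds: "max T 0 \<le> a / B1" "max T 0 \<le> b / B2" "max T 0 \<le> c / B3"
  shows "prob {\<omega> \<in> space M. a < \<bar>f1 (U \<omega>) * g1 (V \<omega>)\<bar> \<and> b < f2 (U \<omega>) * g2 (V \<omega>) \<and> c < f3 (U \<omega>) * g3 (V \<omega>)}
      \<le> e * prob {\<omega> \<in> space M. b < f2 (U \<omega>) * g2 (V \<omega>) \<and> c < f3 (U \<omega>) * g3 (V \<omega>)}"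
proof -
  have U[measurable]: "U \<in> measurable M N1" and V[measurable]: "V \<in> measurable M N2"
    using ind by (auto simp: indep_var_distribution_eq)
  define Sn where "Sn = {p \<in> space (N1 \<Otimes>\<^sub>M N2). a < \<bar>f1 (fst p) * g1 (snd p)\<bar>
      \<and> b < f2 (fst p) * g2 (snd p) \<and> c < f3 (fst p) * g3 (snd p)}"
  define Sd where "Sd = {p \<in> space (N1 \<Otimes>\<^sub>M N2). b < f2 (fst p) * g2 (snd p) \<and> c < f3 (fst p) * g3 (snd p)}"
  have sets: "Sn \<in> sets (N1 \<Otimes>\<^sub>M N2)" "Sd \<in> sets (N1 \<Otimes>\<^sub>M N2)"
    unfolding Sn_def Sd_def by measurable
  have sections: "{\<eta> \<in> space M. (U \<omega>, V \<eta>) \<in> Sn} = {\<eta> \<in> space M. a < \<bar>f1 (U \<omega>) * g1 (V \<eta>)\<bar>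
      \<and> b < f2 (U \<omega>) * g2 (V \<eta>) \<and> c < f3 (U \<omega>) * g3 (V \<eta>)}"
    "{\<eta> \<in> space M. (U \<omega>, V \<eta>) \<in> Sd} = {\<eta> \<in> space M. b < f2 (U \<omega>) * g2 (V \<eta>) \<and> c < f3 (U \<omega>) * g3 (V \<eta>)}"
    if "\<omega> \<in> space M" for \<omega>
    using that by (auto simp: Sn_def Sd_def space_pair_measure measurable_space[OF U] measurable_space[OF V])
  have "AE \<omega> in M. emeasure M {\<eta> \<in> space M. (U \<omega>, V \<eta>) \<in> Sn}
      \<le> e * emeasure M {\<eta> \<in> space M. (U \<omega>, V \<eta>) \<in> Sd}"
    using bounded(1) bounded(2) bounded(3) AE_space
  proof eventually_elim
    case (elim \<omega>)
    then show ?case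
      using prob_const_mult_tail_le[of "\<lambda>\<eta>. g1 (V \<eta>)" "\<lambda>\<eta>. g2 (V \<eta>)" "\<lambda>\<eta>. g3 (V \<eta>)"
          "f1 (U \<omega>)" B1 "f2 (U \<omega>)" B2 "f3 (U \<omega>)" B3 T e a b c] B tail thresholds \<open>0 \<le> e\<close>
      by (simp add: sections emeasure_eq_measure ennreal_mult[symmetric] ennreal_leI)
  qed
  then have "emeasure M {\<omega> \<in> space M. (U \<omega>, V \<omega>) \<in> Sn} \<le> e * emeasure M {\<omega> \<in> space M. (U \<omega>, V \<omega>) \<in> Sd}"
    by (rule emeasure_indep_var_Pair_le[OF ind sets])
  moreover have "{\<omega> \<in> space M. (U \<omega>, V \<omega>) \<in> Sn} = {\<omega> \<in> space M. a < \<bar>f1 (U \<omega>) * g1 (V \<omega>)\<bar>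
      \<and> b < f2 (U \<omega>) * g2 (V \<omega>) \<and> c < f3 (U \<omega>) * g3 (V \<omega>)}"
    "{\<omega> \<in> space M. (U \<omega>, V \<omega>) \<in> Sd} = {\<omega> \<in> space M. b < f2 (U \<omega>) * g2 (V \<omega>) \<and> c < f3 (U \<omega>) * g3 (V \<omega>)}"
    by (auto simp: Sn_def Sd_def space_pair_measure measurable_space[OF U] measurable_space[OF V])
  ultimately show ?thesis
    using \<open>0 \<le> e\<close> by (simp add: emeasure_eq_measure ennreal_mult[symmetric])
qed

lemma tendsto_condP_indep_mult:
  fixes f1 f2 f3 g1 g2 g3 :: "'u \<Rightarrow> real"
  assumes ind: "indep_var N1 U N2 V"
    and meas[measurable]: "f1 \<in> borel_measurable N1" "f2 \<in> borel_measurable N1" "f3 \<in> borel_measurable N1"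
      "g1 \<in> borel_measurable N2" "g2 \<in> borel_measurable N2" "g3 \<in> borel_measurable N2"
    and bounded1: "\<exists>B1>0. AE \<omega> in M. 0 \<le> f1 (U \<omega>) \<and> f1 (U \<omega>) \<le> B1"
    and bounded2: "\<exists>B2>0. AE \<omega> in M. 0 \<le> f2 (U \<omega>) \<and> f2 (U \<omega>) \<le> B2"
    and bounded3: "\<exists>B3>0. AE \<omega> in M. 0 \<le> f3 (U \<omega>) \<and> f3 (U \<omega>) \<le> B3"
    and lim: "((\<lambda>(a, b, c). condP M (\<lambda>\<omega>. a < \<bar>g1 (V \<omega>)\<bar>) (\<lambda>\<omega>. b < g2 (V \<omega>) \<and> c < g3 (V \<omega>)))
        \<longlongrightarrow> 0) (at_top \<times>\<^sub>F at_top \<times>\<^sub>F at_top)"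
  shows "((\<lambda>(a, b, c). condP M (\<lambda>\<omega>. a < \<bar>f1 (U \<omega>) * g1 (V \<omega>)\<bar>)
      (\<lambda>\<omega>. b < f2 (U \<omega>) * g2 (V \<omega>) \<and> c < f3 (U \<omega>) * g3 (V \<omega>))) \<longlongrightarrow> 0) (at_top \<times>\<^sub>F at_top \<times>\<^sub>F at_top)"
proof -
  obtain B1 B2 B3 where B: "0 < B1" "0 < B2" "0 < B3" and bounded:
    "AE \<omega> in M. 0 \<le> f1 (U \<omega>) \<and> f1 (U \<omega>) \<le> B1" "AE \<omega> in M. 0 \<le> f2 (U \<omega>) \<and> f2 (U \<omega>) \<le> B2"
    "AE \<omega> in M. 0 \<le> f3 (U \<omega>) \<and> f3 (U \<omega>) \<le> B3"
    using bounded1 bounded2 bounded3 by blast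
  have tail: "\<forall>e>0. \<exists>T. \<forall>a b c. T \<le> a \<longrightarrow> T \<le> b \<longrightarrow> T \<le> c \<longrightarrow>
      condP M (\<lambda>\<omega>. a < \<bar>g1 (V \<omega>)\<bar>) (\<lambda>\<omega>. b < g2 (V \<omega>) \<and> c < g3 (V \<omega>)) \<le> e"
    using lim by (simp add: tendsto_zero_at_top_prod3_iff)
  have "\<forall>e>0. \<exists>T. \<forall>a b c. T \<le> a \<longrightarrow> T \<le> b \<longrightarrow> T \<le> c \<longrightarrow>
      condP M (\<lambda>\<omega>. a < \<bar>f1 (U \<omega>) * g1 (V \<omega>)\<bar>)
        (\<lambda>\<omega>. b < f2 (U \<omega>) * g2 (V \<omega>) \<and> c < f3 (U \<omega>) * g3 (V \<omega>)) \<le> e"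
  proof (intro allI impI)
    fix e :: real assume "0 < e"
    have [measurable]: "U \<in> measurable M N1" "V \<in> measurable M N2"
      using ind by (auto simp: indep_var_distribution_eq)
    have sets: "{\<omega> \<in> space M. b < g2 (V \<omega>) \<and> c < g3 (V \<omega>)} \<in> sets M"
      "{\<omega> \<in> space M. b < f2 (U \<omega>) * g2 (V \<omega>) \<and> c < f3 (U \<omega>) * g3 (V \<omega>)} \<in> sets M" for b c
      by measurable
    from tail \<open>0 < e\<close> obtain T where "\<And>a b c. T \<le> a \<Longrightarrow> T \<le> b \<Longrightarrow> T \<le> c \<Longrightarrow>
        condP M (\<lambda>\<omega>. a < \<bar>g1 (V \<omega>)\<bar>) (\<lambda>\<omega>. b < g2 (V \<omega>) \<and> c < g3 (V \<omega>)) \<le> e"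
      by blast
    then have T: "\<And>a b c. T \<le> a \<Longrightarrow> T \<le> b \<Longrightarrow> T \<le> c \<Longrightarrow>
        prob {\<omega> \<in> space M. a < \<bar>g1 (V \<omega>)\<bar> \<and> b < g2 (V \<omega>) \<and> c < g3 (V \<omega>)}
          \<le> e * prob {\<omega> \<in> space M. b < g2 (V \<omega>) \<and> c < g3 (V \<omega>)}"
      using \<open>0 < e\<close> by (simp add: condP_le_iff[OF sets(1)])
    show "\<exists>T'. \<forall>a b c. T' \<le> a \<longrightarrow> T' \<le> b \<longrightarrow> T' \<le> c \<longrightarrow>
          condP M (\<lambda>\<omega>. a < \<bar>f1 (U \<omega>) * g1 (V \<omega>)\<bar>)
            (\<lambda>\<omega>. b < f2 (U \<omega>) * g2 (V \<omega>) \<and> c < f3 (U \<omega>) * g3 (V \<omega>)) \<le> e"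
    proof (intro exI allI impI)
      fix a b c assume abc: "max T 0 * max B1 (max B2 B3) \<le> a" "max T 0 * max B1 (max B2 B3) \<le> b"
        "max T 0 * max B1 (max B2 B3) \<le> c"
      have "max T 0 * B1 \<le> max T 0 * max B1 (max B2 B3)" "max T 0 * B2 \<le> max T 0 * max B1 (max B2 B3)"
        "max T 0 * B3 \<le> max T 0 * max B1 (max B2 B3)"
        by (intro mult_left_mono; simp)+
      then have thresholds: "max T 0 \<le> a / B1" "max T 0 \<le> b / B2" "max T 0 \<le> c / B3"
        using abc by (simp_all only: pos_le_divide_eq[OF B(1)] pos_le_divide_eq[OF B(2)] pos_le_divide_eq[OF B(3)])
      then have "prob {\<omega> \<in> space M. a < \<bar>f1 (U \<omega>) * g1 (V \<omega>)\<bar>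
            \<and> b < f2 (U \<omega>) * g2 (V \<omega>) \<and> c < f3 (U \<omega>) * g3 (V \<omega>)}
          \<le> e * prob {\<omega> \<in> space M. b < f2 (U \<omega>) * g2 (V \<omega>) \<and> c < f3 (U \<omega>) * g3 (V \<omega>)}"
        using \<open>0 < e\<close> by (intro measure_indep_mult_tail_le[OF ind meas bounded B T _ thresholds]) simp_all
      then show "condP M (\<lambda>\<omega>. a < \<bar>f1 (U \<omega>) * g1 (V \<omega>)\<bar>)
          (\<lambda>\<omega>. b < f2 (U \<omega>) * g2 (V \<omega>) \<and> c < f3 (U \<omega>) * g3 (V \<omega>)) \<le> e"
        using \<open>0 < e\<close> by (simp add: condP_le_iff[OF sets(2)])
    qed
  qed
  then show ?thesis
    by (simp add: tendsto_zero_at_top_prod3_iff)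
qed

lemma GTAI_indep_mult:
  fixes x \<theta> y \<delta> :: "nat \<Rightarrow> 'u \<Rightarrow> real"
  assumes ind: "indep_var N1 U N2 V"
    and meas: "\<And>i. i < n \<Longrightarrow> \<theta> i \<in> borel_measurable N1" "\<And>j. j < m \<Longrightarrow> \<delta> j \<in> borel_measurable N1"
      "\<And>i. i < n \<Longrightarrow> x i \<in> borel_measurable N2" "\<And>j. j < m \<Longrightarrow> y j \<in> borel_measurable N2"
    and GTAI: "GTAI M n m (\<lambda>i \<omega>. x i (V \<omega>)) (\<lambda>j \<omega>. y j (V \<omega>))"
    and \<theta>_bounded: "\<And>i. i < n \<Longrightarrow> \<exists>b>0. AE \<omega> in M. 0 \<le> \<theta> i (U \<omega>) \<and> \<theta> i (U \<omega>) \<le> b"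
    and \<delta>_bounded: "\<And>j. j < m \<Longrightarrow> \<exists>b>0. AE \<omega> in M. 0 \<le> \<delta> j (U \<omega>) \<and> \<delta> j (U \<omega>) \<le> b"
    and \<theta>_nondegenerate: "\<And>i. i < n \<Longrightarrow> prob {\<omega> \<in> space M. \<theta> i (U \<omega>) = 0} < 1"
    and \<delta>_nondegenerate: "\<And>j. j < m \<Longrightarrow> prob {\<omega> \<in> space M. \<delta> j (U \<omega>) = 0} < 1"
  shows "GTAI M n m (\<lambda>i \<omega>. \<theta> i (U \<omega>) * x i (V \<omega>)) (\<lambda>j \<omega>. \<delta> j (U \<omega>) * y j (V \<omega>))"
  unfolding GTAI_def
proof (intro conjI allI impI)
  fix i assume "i < n"
  with GTAI \<theta>_bounded[OF \<open>i < n\<close>] show "unbounded_above M (\<lambda>\<omega>. \<theta> i (U \<omega>) * x i (V \<omega>))"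
    using \<theta>_nondegenerate
    by (intro unbounded_above_indep_mult[OF ind meas(1,3)]) (auto simp: GTAI_def elim: AE_mp)
next
  fix j assume "j < m"
  with GTAI \<delta>_bounded[OF \<open>j < m\<close>] show "unbounded_above M (\<lambda>\<omega>. \<delta> j (U \<omega>) * y j (V \<omega>))"
    using \<delta>_nondegenerate
    by (intro unbounded_above_indep_mult[OF ind meas(2,4)]) (auto simp: GTAI_def elim: AE_mp)
next
  fix i k j assume ikj: "i < n" "k < n" "j < m" "i \<noteq> k"
  have "((\<lambda>(a, b, c). condP M (\<lambda>\<omega>. a < \<bar>x i (V \<omega>)\<bar>) (\<lambda>\<omega>. b < x k (V \<omega>) \<and> c < y j (V \<omega>)))
      \<longlongrightarrow> 0) (at_top \<times>\<^sub>F at_top \<times>\<^sub>F at_top)"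
    using GTAI ikj by (simp add: GTAI_def)
  then show "((\<lambda>(xi, xk, yj). condP M (\<lambda>\<omega>. xi < \<bar>\<theta> i (U \<omega>) * x i (V \<omega>)\<bar>)
      (\<lambda>\<omega>. xk < \<theta> k (U \<omega>) * x k (V \<omega>) \<and> yj < \<delta> j (U \<omega>) * y j (V \<omega>))) \<longlongrightarrow> 0)
      (at_top \<times>\<^sub>F at_top \<times>\<^sub>F at_top)"
    by (rule tendsto_condP_indep_mult[OF ind meas(1)[OF ikj(1)] meas(1)[OF ikj(2)] meas(2)[OF ikj(3)]
          meas(3)[OF ikj(1)] meas(3)[OF ikj(2)] meas(4)[OF ikj(3)]
          \<theta>_bounded[OF ikj(1)] \<theta>_bounded[OF ikj(2)] \<delta>_bounded[OF ikj(3)]])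
next
  fix j k i assume jki: "j < m" "k < m" "i < n" "j \<noteq> k"
  \<comment> \<open>GTAI lists the threshold of \<open>\<bar>Y\<^sub>j\<bar>\<close> second, the lemma above expects it first\<close>
  from GTAI jki have "((\<lambda>(b, a, c). condP M (\<lambda>\<omega>. a < \<bar>y j (V \<omega>)\<bar>) (\<lambda>\<omega>. b < x i (V \<omega>) \<and> c < y k (V \<omega>)))
      \<longlongrightarrow> 0) (at_top \<times>\<^sub>F at_top \<times>\<^sub>F at_top)"
    by (simp add: GTAI_def)
  then have "((\<lambda>(a, b, c). condP M (\<lambda>\<omega>. a < \<bar>y j (V \<omega>)\<bar>) (\<lambda>\<omega>. b < x i (V \<omega>) \<and> c < y k (V \<omega>)))
      \<longlongrightarrow> 0) (at_top \<times>\<^sub>F at_top \<times>\<^sub>F at_top)"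
    by (subst tendsto_at_top_prod3_swap12[symmetric]) simp
  then have "((\<lambda>(a, b, c). condP M (\<lambda>\<omega>. a < \<bar>\<delta> j (U \<omega>) * y j (V \<omega>)\<bar>)
      (\<lambda>\<omega>. b < \<theta> i (U \<omega>) * x i (V \<omega>) \<and> c < \<delta> k (U \<omega>) * y k (V \<omega>))) \<longlongrightarrow> 0)
      (at_top \<times>\<^sub>F at_top \<times>\<^sub>F at_top)"
    by (rule tendsto_condP_indep_mult[OF ind meas(2)[OF jki(1)] meas(1)[OF jki(3)] meas(2)[OF jki(2)]
          meas(4)[OF jki(1)] meas(3)[OF jki(3)] meas(4)[OF jki(2)]
          \<delta>_bounded[OF jki(1)] \<theta>_bounded[OF jki(3)] \<delta>_bounded[OF jki(2)]])
  then show "((\<lambda>(xi, yj, yk). condP M (\<lambda>\<omega>. yj < \<bar>\<delta> j (U \<omega>) * y j (V \<omega>)\<bar>)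
      (\<lambda>\<omega>. xi < \<theta> i (U \<omega>) * x i (V \<omega>) \<and> yk < \<delta> k (U \<omega>) * y k (V \<omega>))) \<longlongrightarrow> 0)
      (at_top \<times>\<^sub>F at_top \<times>\<^sub>F at_top)"
    by (subst tendsto_at_top_prod3_swap12[symmetric]) simp
qed
end

lemma GTAI_cong:
  assumes "\<And>i \<omega>. i < n \<Longrightarrow> X i \<omega> = X' i \<omega>" and "\<And>j \<omega>. j < m \<Longrightarrow> Y j \<omega> = Y' j \<omega>"
  shows "GTAI M n m X Y \<longleftrightarrow> GTAI M n m X' Y'"
  unfolding GTAI_def unbounded_above_def condP_def using assms by simp

theorem lemma2p1:
  fixes M :: "'a measure" and n m :: nat
    and X Y Theta Delta :: "nat \<Rightarrow> 'a \<Rightarrow> real"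
  assumes "prob_space M"
    and "\<And>i. i < n \<Longrightarrow> X i \<in> borel_measurable M"
    and "\<And>j. j < m \<Longrightarrow> Y j \<in> borel_measurable M"
    and "\<And>i. i < n \<Longrightarrow> Theta i \<in> borel_measurable M"
    and "\<And>j. j < m \<Longrightarrow> Delta j \<in> borel_measurable M"
    and "GTAI M n m X Y"
    and "\<And>i. i < n \<Longrightarrow> AE \<omega> in M. Theta i \<omega> \<ge> 0"
    and "\<And>j. j < m \<Longrightarrow> AE \<omega> in M. Delta j \<omega> \<ge> 0"
    and "\<And>i. i < n \<Longrightarrow> measure M {\<omega> \<in> space M. Theta i \<omega> = 0} < 1"
    and "\<And>j. j < m \<Longrightarrow> measure M {\<omega> \<in> space M. Delta j \<omega> = 0} < 1"
    and "\<And>i. i < n \<Longrightarrow> \<exists>b>0. measure M {\<omega> \<in> space M. Theta i \<omega> \<le> b} = 1"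
    and "\<And>j. j < m \<Longrightarrow> \<exists>d>0. measure M {\<omega> \<in> space M. Delta j \<omega> \<le> d} = 1"
    and "prob_space.indep_var M
           (PiM {..<n} (\<lambda>_. borel) \<Otimes>\<^sub>M PiM {..<m} (\<lambda>_. borel))
           (\<lambda>\<omega>. (\<lambda>i\<in>{..<n}. Theta i \<omega>, \<lambda>j\<in>{..<m}. Delta j \<omega>))
           (PiM {..<n} (\<lambda>_. borel) \<Otimes>\<^sub>M PiM {..<m} (\<lambda>_. borel))
           (\<lambda>\<omega>. (\<lambda>i\<in>{..<n}. X i \<omega>, \<lambda>j\<in>{..<m}. Y j \<omega>))"
  shows "GTAI M n m (\<lambda>i \<omega>. Theta i \<omega> * X i \<omega>) (\<lambda>j \<omega>. Delta j \<omega> * Y j \<omega>)"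
proof -
  define N :: "((nat \<Rightarrow> real) \<times> (nat \<Rightarrow> real)) measure"
    where "N = PiM {..<n} (\<lambda>_. borel) \<Otimes>\<^sub>M PiM {..<m} (\<lambda>_. borel)"
  have fst_measurable: "\<And>i. i < n \<Longrightarrow> (\<lambda>u. fst u i) \<in> borel_measurable N"
    unfolding N_def by measurable
  have snd_measurable: "\<And>j. j < m \<Longrightarrow> (\<lambda>u. snd u j) \<in> borel_measurable N"
    unfolding N_def by measurable
  interpret prob_space M by fact
  define U where "U = (\<lambda>\<omega>. (\<lambda>i\<in>{..<n}. Theta i \<omega>, \<lambda>j\<in>{..<m}. Delta j \<omega>))"
  define V where "V = (\<lambda>\<omega>. (\<lambda>i\<in>{..<n}. X i \<omega>, \<lambda>j\<in>{..<m}. Y j \<omega>))"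
  have coordinates: "\<And>i \<omega>. i < n \<Longrightarrow> fst (U \<omega>) i = Theta i \<omega>" "\<And>i \<omega>. i < n \<Longrightarrow> fst (V \<omega>) i = X i \<omega>"
    "\<And>j \<omega>. j < m \<Longrightarrow> snd (U \<omega>) j = Delta j \<omega>" "\<And>j \<omega>. j < m \<Longrightarrow> snd (V \<omega>) j = Y j \<omega>"
    by (simp_all add: U_def V_def)
  have ind: "indep_var N U N V"
    using assms(13) unfolding N_def U_def V_def .
  have "GTAI M n m (\<lambda>i \<omega>. fst (U \<omega>) i * fst (V \<omega>) i) (\<lambda>j \<omega>. snd (U \<omega>) j * snd (V \<omega>) j)"
  proof (rule GTAI_indep_mult[OF ind, where \<theta>="\<lambda>i u. fst u i" and x="\<lambda>i u. fst u i"
        and \<delta>="\<lambda>j u. snd u j" and y="\<lambda>j u. snd u j"])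
    show "GTAI M n m (\<lambda>i \<omega>. fst (V \<omega>) i) (\<lambda>j \<omega>. snd (V \<omega>) j)"
      using assms(6) by (subst GTAI_cong[where X'=X and Y'=Y]) (simp_all add: coordinates)
    show "\<exists>b>0. AE \<omega> in M. 0 \<le> fst (U \<omega>) i \<and> fst (U \<omega>) i \<le> b"
      "prob {\<omega> \<in> space M. fst (U \<omega>) i = 0} < 1" if "i < n" for i
      using AE_nonneg_le_of_prob_le_eq_1[OF assms(7)[OF that]] assms(9,11)[OF that] that
      by (simp_all add: coordinates) blast
    show "\<exists>b>0. AE \<omega> in M. 0 \<le> snd (U \<omega>) j \<and> snd (U \<omega>) j \<le> b"
      "prob {\<omega> \<in> space M. snd (U \<omega>) j = 0} < 1" if "j < m" for j
      using AE_nonneg_le_of_prob_le_eq_1[OF assms(8)[OF that]] assms(10,12)[OF that] that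
      by (simp_all add: coordinates) blast
  qed (fact fst_measurable snd_measurable)+
  then show ?thesis
    by (subst (asm) GTAI_cong[where X'="\<lambda>i \<omega>. Theta i \<omega> * X i \<omega>" and Y'="\<lambda>j \<omega>. Delta j \<omega> * Y j \<omega>"])
      (simp_all add: coordinates)
qed
end
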